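(* For every integer $N\ge 3$, the graph $G_N=K_2\cup (N-2)K_1$ satisfies $|V(G_N)|=N$, $\Delta(G_N)=1<N-1$, and $\hat r_\infty(G_N)=1$. Consequently, there is an infinite family of graphs $G_N$ with $|V(G_N)|=N$, $\Delta(G_N)<N-1$ and $\hat r_\infty(G_N)=1$ for every $N$; and for every fixed $c>1$ there is a family of graphs $G_N$ with $|V(G_N)|=N$ and $\Delta(G_N)<c$ such that $\hat r_\infty(G_N)$ does not tend to $0$ as $N\to\infty$.
   Context: All graphs are finite and simple; a graph is nonempty if it has at least one edge. $G\cup H$ is disjoint union, $sK_1$ is the edgeless graph on $s$ vertices, $tK_2$ is a matching with $t$ edges, $\Delta$ is maximum degree. For graphs $F,G,H$, $F\to(G,H)$ means every red--blue coloring of $E(F)$ contains a red copy of $G$ or a blue copy of $H$, and $\hat r(G,H)=\min\{|E(F)|:F\to(G,H)\}$. For a nonempty graph $G$, $\hat r_\infty(G)=\lim_{t\to\infty}\frac{\hat r(tK_2,G)}{t\,|E(G)|}$ (this limit exists). *)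

theory Defs
  imports "HOL-Analysis.Analysis"
begin

text \<open>Finite simple graphs with vertices labelled by natural numbers
  (every finite simple graph is isomorphic to one of these).\<close>

record graph =
  verts :: "nat set"
  edges :: "nat set set"

definition wf_graph :: "graph \<Rightarrow> bool" where
  "wf_graph G \<longleftrightarrow> finite (verts G) \<and> (\<forall>e\<in>edges G. e \<subseteq> verts G \<and> card e = 2)"

definition nonempty_graph :: "graph \<Rightarrow> bool" where
  "nonempty_graph G \<longleftrightarrow> edges G \<noteq> {}"

definition degree :: "graph \<Rightarrow> nat \<Rightarrow> nat" where
  "degree G v = card {e \<in> edges G. v \<in> e}"

definition max_degree :: "graph \<Rightarrow> nat" where
  "max_degree G = Max (degree G ` verts G)"

definition contains_copy :: "graph \<Rightarrow> graph \<Rightarrow> bool" where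
  "contains_copy H G \<longleftrightarrow>
     (\<exists>f. inj_on f (verts G) \<and> f ` verts G \<subseteq> verts H \<and> (\<forall>e\<in>edges G. f ` e \<in> edges H))"

text \<open>Sub-graph of F formed by the edges of a given colour (True = red, False = blue).\<close>
definition colour_class :: "graph \<Rightarrow> (nat set \<Rightarrow> bool) \<Rightarrow> bool \<Rightarrow> graph" where
  "colour_class F c b = \<lparr>verts = verts F, edges = {e \<in> edges F. c e = b}\<rparr>"

definition arrows :: "graph \<Rightarrow> graph \<Rightarrow> graph \<Rightarrow> bool" where
  "arrows F G H \<longleftrightarrow>
     (\<forall>c :: nat set \<Rightarrow> bool. contains_copy (colour_class F c True) G
                             \<or> contains_copy (colour_class F c False) H)"

definition size_ramsey :: "graph \<Rightarrow> graph \<Rightarrow> nat" where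
  "size_ramsey G H = (LEAST m. \<exists>F. wf_graph F \<and> arrows F G H \<and> card (edges F) = m)"

definition matching :: "nat \<Rightarrow> graph" where
  "matching t = \<lparr>verts = {0..<2*t}, edges = {{2*i, 2*i+1} | i. i < t}\<rparr>"

definition r_infty :: "graph \<Rightarrow> real" where
  "r_infty G = lim (\<lambda>t. real (size_ramsey (matching t) G) / (real t * real (card (edges G))))"

definition G_N :: "nat \<Rightarrow> graph" where
  "G_N N = \<lparr>verts = {0..<N}, edges = {{0, 1}}\<rparr>"

end

theory Submission
  imports Defs
begin

(* Colouring every edge red shows that a graph F with F -> (tK_2, G) contains tK_2
   whenever G has an edge, so it has at least t edges. Conversely, t disjoint edges padded
   with isolated vertices already arrow (tK_2, K_2 + (N-2)K_1): either all t edges are red,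
   or one of them is blue and, together with N - 2 further vertices, forms a blue copy of
   K_2 + (N-2)K_1. Hence the size Ramsey number is exactly t, and the ratio defining the
   limit is constantly 1. *)

lemma wf_graph_finite_edges: "wf_graph F \<Longrightarrow> finite (edges F)"
  unfolding wf_graph_def by (meson Pow_iff finite_Pow_iff finite_subset subsetI)

lemma wf_graph_colour_class: "wf_graph F \<Longrightarrow> wf_graph (colour_class F c b)"
  by (simp add: wf_graph_def colour_class_def)

lemma colour_class_const: "colour_class F (\<lambda>_. b) b = F"
  by (simp add: colour_class_def)

lemma edges_colour_class_const_other: "edges (colour_class F (\<lambda>_. b) (\<not> b)) = {}"
  by (simp add: colour_class_def)

lemma contains_copy_subgraph:
  assumes "verts G \<subseteq> verts F" and "edges G \<subseteq> edges F"
  shows "contains_copy F G"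
  unfolding contains_copy_def using assms by (intro exI[of _ id]) auto

lemma contains_copy_card_edges_le:
  assumes "contains_copy F G" and "wf_graph G" and "finite (edges F)"
  shows "card (edges G) \<le> card (edges F)"
proof -
  obtain f where inj: "inj_on f (verts G)" and maps: "\<forall>e\<in>edges G. f ` e \<in> edges F"
    using assms(1) unfolding contains_copy_def by blast
  have "edges G \<subseteq> Pow (verts G)"
    using assms(2) unfolding wf_graph_def by blast
  then have "inj_on (image f) (edges G)"
    using inj_on_image_Pow[OF inj] inj_on_subset by blast
  then show ?thesis
    using card_inj_on_le maps assms(3) by blast
qed

lemma arrows_card_edges_le:
  assumes "arrows F H G" and "wf_graph F" and "wf_graph H" and "nonempty_graph G"
  shows "card (edges H) \<le> card (edges F)"
proof -
  have "\<not> contains_copy (colour_class F (\<lambda>_. True) False) G"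
    using assms(4) edges_colour_class_const_other[of F True]
    unfolding contains_copy_def nonempty_graph_def by auto
  then have "contains_copy F H"
    using assms(1) colour_class_const[of F True] unfolding arrows_def by metis
  then show ?thesis
    using contains_copy_card_edges_le assms(2,3) wf_graph_finite_edges by blast
qed

lemma wf_graph_matching: "wf_graph (matching t)"
  by (auto simp: wf_graph_def matching_def)

lemma card_edges_matching: "card (edges (matching t)) = t"
proof -
  have "edges (matching t) = (\<lambda>i. {2*i, 2*i+1}) ` {..<t}"
    by (auto simp: matching_def)
  moreover have "inj_on (\<lambda>i. {2*i, 2*i+1::nat}) {..<t}"
    by (rule inj_onI) (auto simp: doubleton_eq_iff)
  ultimately show ?thesis
    by (simp add: card_image)
qed

lemma wf_graph_G_N: "N \<ge> 2 \<Longrightarrow> wf_graph (G_N N)"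
  by (auto simp: wf_graph_def G_N_def)

lemma nonempty_graph_G_N: "nonempty_graph (G_N N)"
  by (simp add: nonempty_graph_def G_N_def)

lemma card_verts_G_N: "card (verts (G_N N)) = N"
  by (simp add: G_N_def)

lemma contains_copy_G_N:
  assumes "wf_graph F" and "nonempty_graph F" and "N \<le> card (verts F)"
  shows "contains_copy F (G_N N)"
proof -
  obtain e where e: "e \<in> edges F"
    using assms(2) unfolding nonempty_graph_def by blast
  have "card e = 2" and "e \<subseteq> verts F"
    using assms(1) e unfolding wf_graph_def by auto
  then obtain a b where ab: "e = {a, b}" "a \<noteq> b" and ab_verts: "{a, b} \<subseteq> verts F"
    by (metis card_2_iff)
  have fin: "finite (verts F)"
    using assms(1) unfolding wf_graph_def by simp
  have card_le: "card {2..<N} \<le> card (verts F - {a, b})"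
    using assms(3) ab(2) ab_verts fin by (simp add: card_Diff_subset)
  obtain g where g_img: "g ` {2..<N} \<subseteq> verts F - {a, b}" and g_inj: "inj_on g {2..<N}"
    using card_le_inj[OF finite_atLeastLessThan finite_Diff[OF fin] card_le] by blast
  have g_verts: "g x \<in> verts F" and g_off: "g x \<notin> {a, b}" if "x \<in> {2..<N}" for x
    using g_img that by (auto simp only: subset_iff image_iff Diff_iff)
  define f where "f x = (if x = 0 then a else if x = 1 then b else g x)" for x :: nat
  have "inj_on f {0..<N}"
  proof (rule inj_onI)
    fix x y assume "x \<in> {0..<N}" "y \<in> {0..<N}" "f x = f y"
    then show "x = y"
      using g_off[of x] g_off[of y] inj_onD[OF g_inj, of x y] ab(2)
      unfolding f_def by (simp split: if_splits)
  qed
  moreover have "f ` {0..<N} \<subseteq> verts F"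
    using g_verts ab_verts unfolding f_def by (simp add: image_subset_iff)
  moreover have "f ` {0, 1} \<in> edges F"
    using e ab unfolding f_def by (simp add: insert_commute)
  ultimately show ?thesis
    unfolding contains_copy_def G_N_def by (intro exI[of _ f]) simp
qed

definition padded_matching :: "nat \<Rightarrow> nat \<Rightarrow> graph" where
  "padded_matching t n = \<lparr>verts = {0..<max (2*t) n}, edges = edges (matching t)\<rparr>"

lemma wf_graph_padded_matching: "wf_graph (padded_matching t n)"
  by (auto simp: wf_graph_def padded_matching_def matching_def)

lemma edges_padded_matching [simp]: "edges (padded_matching t n) = edges (matching t)"
  by (simp add: padded_matching_def)

lemma arrows_padded_matching_G_N:
  "arrows (padded_matching t N) (matching t) (G_N N)"
  unfolding arrows_def
proof
  fix c :: "nat set \<Rightarrow> bool"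
  let ?F = "padded_matching t N"
  show "contains_copy (colour_class ?F c True) (matching t) \<or>
        contains_copy (colour_class ?F c False) (G_N N)"
  proof (cases "\<forall>e\<in>edges ?F. c e")
    case True
    then have "contains_copy (colour_class ?F c True) (matching t)"
      by (intro contains_copy_subgraph)
        (auto simp: colour_class_def padded_matching_def matching_def)
    then show ?thesis ..
  next
    case False
    then have "nonempty_graph (colour_class ?F c False)"
      by (auto simp: nonempty_graph_def colour_class_def)
    moreover have "N \<le> card (verts (colour_class ?F c False))"
      by (simp add: colour_class_def padded_matching_def)
    ultimately have "contains_copy (colour_class ?F c False) (G_N N)"
      using contains_copy_G_N wf_graph_colour_class wf_graph_padded_matching by blast
    then show ?thesis ..
  qed
qed

lemma size_ramsey_matching_G_N: "size_ramsey (matching t) (G_N N) = t"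
  unfolding size_ramsey_def
proof (rule Least_equality)
  show "\<exists>F. wf_graph F \<and> arrows F (matching t) (G_N N) \<and> card (edges F) = t"
    using wf_graph_padded_matching arrows_padded_matching_G_N card_edges_matching
    by (intro exI[of _ "padded_matching t N"]) simp
next
  fix m
  assume "\<exists>F. wf_graph F \<and> arrows F (matching t) (G_N N) \<and> card (edges F) = m"
  then obtain F where F: "wf_graph F" "arrows F (matching t) (G_N N)" and "card (edges F) = m"
    by blast
  then show "t \<le> m"
    using arrows_card_edges_le[OF F(2,1) wf_graph_matching nonempty_graph_G_N]
    by (simp add: card_edges_matching)
qed

lemma r_infty_eq_1I:
  assumes "card (edges G) > 0"
    and "\<And>t. size_ramsey (matching t) G = t * card (edges G)"
  shows "r_infty G = 1"
proof -
  have "\<forall>\<^sub>F t in sequentially.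
          real (size_ramsey (matching t) G) / (real t * real (card (edges G))) = 1"
    using eventually_gt_at_top[of 0] by eventually_elim (use assms in simp)
  then have "(\<lambda>t. real (size_ramsey (matching t) G) / (real t * real (card (edges G))))
              \<longlonglongrightarrow> 1"
    by (rule tendsto_eventually)
  then show ?thesis
    unfolding r_infty_def by (rule limI)
qed

lemma r_infty_G_N: "r_infty (G_N N) = 1"
proof -
  have "card (edges (G_N N)) = 1"
    by (simp add: G_N_def)
  then show ?thesis
    by (intro r_infty_eq_1I) (simp_all add: size_ramsey_matching_G_N)
qed

lemma max_degree_G_N:
  assumes "N \<ge> 2"
  shows "max_degree (G_N N) = 1"
proof -
  have "degree (G_N N) v = (if v \<in> {0, 1} then 1 else 0)" for v
  proof -
    have "{e \<in> edges (G_N N). v \<in> e} = (if v \<in> {0, 1} then {{0, 1}} else {})"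
      by (auto simp: G_N_def)
    then show ?thesis
      unfolding degree_def by simp
  qed
  moreover have "(0::nat) \<in> verts (G_N N)"
    using assms by (simp add: G_N_def)
  ultimately show ?thesis
    unfolding max_degree_def by (intro Max_eqI) (auto simp: G_N_def)
qed

theorem corollary2p7:
  shows "(\<forall>N::nat. N \<ge> 3 \<longrightarrow>
            wf_graph (G_N N) \<and> nonempty_graph (G_N N) \<and>
            card (verts (G_N N)) = N \<and>
            max_degree (G_N N) = 1 \<and> 1 < N - 1 \<and>
            r_infty (G_N N) = 1)
       \<and> (\<exists>Gf :: nat \<Rightarrow> graph. \<forall>N::nat. N \<ge> 3 \<longrightarrow>
            wf_graph (Gf N) \<and> nonempty_graph (Gf N) \<and>
            card (verts (Gf N)) = N \<and> max_degree (Gf N) < N - 1 \<and>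
            r_infty (Gf N) = 1)
       \<and> (\<forall>c::real. c > 1 \<longrightarrow> (\<exists>Gf :: nat \<Rightarrow> graph.
            (\<forall>N::nat. N \<ge> 3 \<longrightarrow>
               wf_graph (Gf N) \<and> nonempty_graph (Gf N) \<and>
               card (verts (Gf N)) = N \<and> real (max_degree (Gf N)) < c) \<and>
            \<not> ((\<lambda>N. r_infty (Gf N)) \<longlonglongrightarrow> 0)))"
proof -
  have "wf_graph (G_N N) \<and> nonempty_graph (G_N N) \<and> card (verts (G_N N)) = N \<and>
             max_degree (G_N N) = 1 \<and> 1 < N - 1 \<and> r_infty (G_N N) = 1" if "N \<ge> 3" for N
    using that wf_graph_G_N nonempty_graph_G_N card_verts_G_N max_degree_G_N r_infty_G_N
    by simp
  moreover have "\<not> ((\<lambda>N. r_infty (G_N N)) \<longlonglongrightarrow> 0)"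
    by (simp add: r_infty_G_N LIMSEQ_const_iff)
  ultimately show ?thesis
    by (intro conjI allI impI exI[of _ G_N]) auto
qed

end
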